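(* Let $F$ be a finite field of characteristic $3$. Let $k\ge 0$ be an integer, $m=3k+1$, and $t$ an integer with $t^3\equiv 1\pmod m$ and $\gcd(m,t-1)=1$. Let $G=T_{3m}=\langle x,y\mid x^m=y^3=1,\ y^{-1}xy=x^t\rangle$ (of order $3m$), $FG$ its group algebra, and $H=\langle x\rangle$. Then $Z(\Delta(G,H))\subseteq Z(FG)$.
   Context: $\Delta(G,H)$ is the ideal of $FG$ generated by $\{h-1\mid h\in H\}$; $Z(R)$ denotes the center of a ring $R$, i.e. the set of elements of $R$ commuting with all elements of $R$. *)

theory Defs
  imports "HOL-Algebra.Algebra"
begin

text \<open>Group algebra FG of a finite group G over a field F, modelled as the
functions carrier G \<rightarrow> F (zero outside the carrier), with convolution.\<close>

definition group_alg :: "('g, 'b) monoid_scheme \<Rightarrow> ('g \<Rightarrow> 'f::field) set" where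
  "group_alg G = {a. \<forall>g. g \<notin> carrier G \<longrightarrow> a g = 0}"

definition ga_mult :: "('g, 'b) monoid_scheme \<Rightarrow> ('g \<Rightarrow> 'f::field) \<Rightarrow> ('g \<Rightarrow> 'f) \<Rightarrow> ('g \<Rightarrow> 'f)" where
  "ga_mult G a b = (\<lambda>g. if g \<in> carrier G
      then (\<Sum>h\<in>carrier G. a h * b (inv\<^bsub>G\<^esub> h \<otimes>\<^bsub>G\<^esub> g)) else 0)"

definition ga_basis :: "('g, 'b) monoid_scheme \<Rightarrow> 'g \<Rightarrow> ('g \<Rightarrow> 'f::field)" where
  "ga_basis G g = (\<lambda>z. if z = g then 1 else 0)"

definition ga_ideal :: "('g, 'b) monoid_scheme \<Rightarrow> ('g \<Rightarrow> 'f::field) set \<Rightarrow> bool" where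
  "ga_ideal G I \<longleftrightarrow> I \<subseteq> group_alg G \<and> (\<lambda>_. 0) \<in> I
     \<and> (\<forall>a\<in>I. \<forall>b\<in>I. (\<lambda>g. a g + b g) \<in> I)
     \<and> (\<forall>a\<in>I. (\<lambda>g. - a g) \<in> I)
     \<and> (\<forall>a\<in>I. \<forall>r\<in>group_alg G. ga_mult G r a \<in> I \<and> ga_mult G a r \<in> I)"

definition ga_ideal_gen :: "('g, 'b) monoid_scheme \<Rightarrow> ('g \<Rightarrow> 'f::field) set \<Rightarrow> ('g \<Rightarrow> 'f) set" where
  "ga_ideal_gen G S = \<Inter>{I. ga_ideal G I \<and> S \<subseteq> I}"

definition Delta :: "('g, 'b) monoid_scheme \<Rightarrow> 'g set \<Rightarrow> ('g \<Rightarrow> 'f::field) set" where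
  "Delta G H = ga_ideal_gen G {(\<lambda>z. ga_basis G h z - ga_basis G \<one>\<^bsub>G\<^esub> z) | h. h \<in> H}"

definition ga_center :: "('g, 'b) monoid_scheme \<Rightarrow> ('g \<Rightarrow> 'f::field) set \<Rightarrow> ('g \<Rightarrow> 'f) set" where
  "ga_center G R = {a \<in> R. \<forall>b\<in>R. ga_mult G a b = ga_mult G b a}"

end

theory Submission imports Defs begin

(* For a normal subgroup H of G whose order is invertible in F, the element
   e = |H|^-1 \<Sum>{h \<in> H} h of FG is central, every element of \<Delta>(G,H) is annihilated
   by e, and 1 - e itself lies in \<Delta>(G,H). So 1 - e is a central identity element
   of \<Delta>(G,H), and an element \<alpha> central in \<Delta>(G,H) commutes with every b in FG:
   \<alpha> b = \<alpha> ((1 - e) b) = ((1 - e) b) \<alpha> = b ((1 - e) \<alpha>) = b \<alpha>.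
   In T_3m the subgroup <x> is normal, and its order divides m = 3k + 1, so it is
   invertible in characteristic 3. *)

lemma ga_mult_closed: "ga_mult G a b \<in> group_alg G"
  by (simp add: ga_mult_def group_alg_def)

lemma ga_mult_add_left: "ga_mult G (\<lambda>z. a z + b z) c = (\<lambda>z. ga_mult G a c z + ga_mult G b c z)"
  by (auto simp: ga_mult_def algebra_simps sum.distrib)

lemma ga_mult_neg_left: "ga_mult G (\<lambda>z. - a z) c = (\<lambda>z. - ga_mult G a c z)"
  by (auto simp: ga_mult_def sum_negf)

lemma ga_mult_diff_left: "ga_mult G (\<lambda>z. a z - b z) c = (\<lambda>z. ga_mult G a c z - ga_mult G b c z)"
  by (auto simp: ga_mult_def algebra_simps sum_subtractf)

lemma ga_mult_diff_right: "ga_mult G c (\<lambda>z. a z - b z) = (\<lambda>z. ga_mult G c a z - ga_mult G c b z)"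
  by (auto simp: ga_mult_def algebra_simps sum_subtractf)

lemma ga_mult_smult_left: "ga_mult G (\<lambda>z. r * a z) b = (\<lambda>z. r * ga_mult G a b z)"
  by (auto simp: ga_mult_def sum_distrib_left mult.assoc)

lemma ga_mult_zero_left: "ga_mult G (\<lambda>_. 0) a = (\<lambda>_. 0)"
  by (auto simp: ga_mult_def)

lemma ga_mult_zero_right: "ga_mult G a (\<lambda>_. 0) = (\<lambda>_. 0)"
  by (auto simp: ga_mult_def)

context group
begin

lemma ga_mult_assoc:
  "ga_mult G (ga_mult G a b) c = ga_mult G a (ga_mult G b c)"
proof (rule ext)
  fix g show "ga_mult G (ga_mult G a b) c g = ga_mult G a (ga_mult G b c) g"
  proof (cases "g \<in> carrier G")
    case g: True
    have "ga_mult G (ga_mult G a b) c g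
        = (\<Sum>h\<in>carrier G. \<Sum>k\<in>carrier G. a k * b (inv k \<otimes> h) * c (inv h \<otimes> g))"
      using g by (simp add: ga_mult_def sum_distrib_right)
    also have "\<dots> = (\<Sum>k\<in>carrier G. \<Sum>h\<in>carrier G. a k * b (inv k \<otimes> h) * c (inv h \<otimes> g))"
      by (rule sum.swap)
    also have "\<dots> = (\<Sum>k\<in>carrier G. \<Sum>h\<in>carrier G. a k * (b h * c (inv h \<otimes> (inv k \<otimes> g))))"
    proof (rule sum.cong[OF refl])
      fix k assume k: "k \<in> carrier G"
      have cancel: "inv h \<otimes> k \<otimes> inv k \<otimes> g = inv h \<otimes> g" if "h \<in> carrier G" for h
        using that k g by (simp add: m_assoc)
      show "(\<Sum>h\<in>carrier G. a k * b (inv k \<otimes> h) * c (inv h \<otimes> g))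
          = (\<Sum>h\<in>carrier G. a k * (b h * c (inv h \<otimes> (inv k \<otimes> g))))"
        by (rule sum.reindex_bij_witness[where i = "\<lambda>h. k \<otimes> h" and j = "\<lambda>h. inv k \<otimes> h"])
          (use k g cancel in \<open>auto simp: m_assoc[symmetric] inv_mult_group\<close>)
    qed
    also have "\<dots> = ga_mult G a (ga_mult G b c) g"
      using g by (simp add: ga_mult_def sum_distrib_left)
    finally show ?thesis .
  qed (simp add: ga_mult_def)
qed

lemma ga_mult_basis_left:
  assumes "finite (carrier G)" "g \<in> carrier G" "z \<in> carrier G"
  shows "ga_mult G (ga_basis G g) a z = a (inv g \<otimes> z)"
proof -
  have "ga_mult G (ga_basis G g) a z = (\<Sum>h\<in>carrier G. if h = g then a (inv h \<otimes> z) else 0)"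
    using assms(3) by (auto simp: ga_mult_def ga_basis_def intro: sum.cong)
  then show ?thesis
    using assms(1,2) by simp
qed

lemma ga_mult_one_left:
  assumes "finite (carrier G)" "a \<in> group_alg G"
  shows "ga_mult G (ga_basis G \<one>) a = a"
proof (rule ext)
  fix z show "ga_mult G (ga_basis G \<one>) a z = a z"
    using assms by (cases "z \<in> carrier G")
      (simp_all add: ga_mult_basis_left, simp add: ga_mult_def group_alg_def)
qed

lemma ga_mult_one_right:
  assumes "finite (carrier G)" "a \<in> group_alg G"
  shows "ga_mult G a (ga_basis G \<one>) = a"
proof (rule ext)
  fix z show "ga_mult G a (ga_basis G \<one>) z = a z"
  proof (cases "z \<in> carrier G")
    case z: True
    have "inv h \<otimes> z = \<one> \<longleftrightarrow> h = z" if "h \<in> carrier G" for h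
      using that z by (metis inv_closed inv_equality inv_inv l_inv)
    then have "ga_mult G a (ga_basis G \<one>) z = (\<Sum>h\<in>carrier G. if h = z then a h else 0)"
      using z by (auto simp: ga_mult_def ga_basis_def intro: sum.cong)
    then show ?thesis
      using z assms(1) by simp
  qed (use assms(2) in \<open>simp add: ga_mult_def group_alg_def\<close>)
qed

lemma ga_mult_class_function_commute:
  assumes "\<And>g h. g \<in> carrier G \<Longrightarrow> h \<in> carrier G \<Longrightarrow> c (inv g \<otimes> h \<otimes> g) = c h"
  shows "ga_mult G c b = ga_mult G b c"
proof (rule ext)
  fix g show "ga_mult G c b g = ga_mult G b c g"
  proof (cases "g \<in> carrier G")
    case g: True
    have "(\<Sum>h\<in>carrier G. c h * b (inv h \<otimes> g)) = (\<Sum>k\<in>carrier G. b k * c (inv k \<otimes> g))"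
    proof (rule sum.reindex_bij_witness[where i = "\<lambda>k. g \<otimes> inv k" and j = "\<lambda>h. inv h \<otimes> g"])
      fix h assume h: "h \<in> carrier G"
      have "inv (inv h \<otimes> g) \<otimes> g = inv g \<otimes> h \<otimes> g"
        using h g by (simp add: inv_mult_group)
      then show "b (inv h \<otimes> g) * c (inv (inv h \<otimes> g) \<otimes> g) = c h * b (inv h \<otimes> g)"
        using assms g h by simp
    next
      fix h assume "h \<in> carrier G"
      then show "g \<otimes> inv (inv h \<otimes> g) = h"
        using g by (simp add: inv_mult_group m_assoc[symmetric])
    next
      fix k assume "k \<in> carrier G"
      then show "inv (g \<otimes> inv k) \<otimes> g = k"
        using g by (simp add: inv_mult_group m_assoc)
    qed (use g in simp_all)
    then show ?thesis
      using g by (simp add: ga_mult_def)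
  qed (simp add: ga_mult_def)
qed

end

lemma ga_ideal_group_alg: "ga_ideal G (group_alg G)"
  by (auto simp: ga_ideal_def group_alg_def ga_mult_def)

lemma ga_ideal_ga_ideal_gen:
  assumes "S \<subseteq> group_alg G"
  shows "ga_ideal G (ga_ideal_gen G S)"
proof (unfold ga_ideal_def, intro conjI ballI)
  show "ga_ideal_gen G S \<subseteq> group_alg G"
    using assms ga_ideal_group_alg[of G] by (auto simp: ga_ideal_gen_def)
qed (auto simp: ga_ideal_gen_def ga_ideal_def)

lemma ga_ideal_gen_subset: "S \<subseteq> ga_ideal_gen G S"
  by (auto simp: ga_ideal_gen_def)

lemma ga_ideal_gen_least: "ga_ideal G I \<Longrightarrow> S \<subseteq> I \<Longrightarrow> ga_ideal_gen G S \<subseteq> I"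
  by (auto simp: ga_ideal_gen_def)

lemma ga_ideal_add: "ga_ideal G I \<Longrightarrow> a \<in> I \<Longrightarrow> b \<in> I \<Longrightarrow> (\<lambda>z. a z + b z) \<in> I"
  by (simp add: ga_ideal_def)

lemma ga_ideal_sum:
  assumes "ga_ideal G I" "finite A" "\<And>s. s \<in> A \<Longrightarrow> u s \<in> I"
  shows "(\<lambda>z. \<Sum>s\<in>A. u s z) \<in> I"
  using assms(2,3)
proof (induction A rule: finite_induct)
  case empty
  then show ?case
    using assms(1) by (simp add: ga_ideal_def)
next
  case (insert a A)
  then have "(\<lambda>z. u a z + (\<Sum>s\<in>A. u s z)) \<in> I"
    by (intro ga_ideal_add[OF assms(1)]) auto
  then show ?case
    using insert by simp
qed

context group
begin

lemma ga_ideal_smult: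
  assumes "finite (carrier G)" "ga_ideal G I" "a \<in> I"
  shows "(\<lambda>z. r * a z) \<in> I"
proof -
  have "a \<in> group_alg G"
    using assms(2,3) by (auto simp: ga_ideal_def)
  then have "(\<lambda>z. r * a z) = ga_mult G (\<lambda>z. r * ga_basis G \<one> z) a"
    using assms(1) by (simp add: ga_mult_smult_left ga_mult_one_left)
  moreover have "(\<lambda>z. r * ga_basis G \<one> z) \<in> group_alg G"
    by (simp add: group_alg_def ga_basis_def)
  ultimately show ?thesis
    using assms(2,3) unfolding ga_ideal_def by simp
qed

lemma ga_annihilator_ideal:
  fixes e :: "'a \<Rightarrow> 'f::field"
  assumes e: "e \<in> group_alg G" and central: "\<And>b. b \<in> group_alg G \<Longrightarrow> ga_mult G e b = ga_mult G b e"
  shows "ga_ideal G {a \<in> group_alg G. ga_mult G a e = (\<lambda>_. 0)}"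
  unfolding ga_ideal_def
proof (intro conjI ballI)
  fix a assume "a \<in> {a \<in> group_alg G. ga_mult G a e = (\<lambda>_. 0)}"
  then have a: "a \<in> group_alg G" and ae: "ga_mult G a e = (\<lambda>_. 0)"
    by auto
  show "(\<lambda>g. - a g) \<in> {a \<in> group_alg G. ga_mult G a e = (\<lambda>_. 0)}"
    using a ae by (auto simp: ga_mult_neg_left group_alg_def)
  fix b assume "b \<in> {a \<in> group_alg G. ga_mult G a e = (\<lambda>_. 0)}"
  then show "(\<lambda>g. a g + b g) \<in> {a \<in> group_alg G. ga_mult G a e = (\<lambda>_. 0)}"
    using a ae by (auto simp: ga_mult_add_left group_alg_def)
next
  fix a r :: "'a \<Rightarrow> 'f" assume "a \<in> {a \<in> group_alg G. ga_mult G a e = (\<lambda>_. 0)}" "r \<in> group_alg G"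
  then have ae: "ga_mult G a e = (\<lambda>_. 0)" and r: "r \<in> group_alg G"
    by auto
  have "ga_mult G (ga_mult G a r) e = ga_mult G (ga_mult G a e) r"
    by (simp add: ga_mult_assoc central[OF r, symmetric])
  then have "ga_mult G (ga_mult G a r) e = (\<lambda>_. 0)"
    by (simp add: ae ga_mult_zero_left)
  moreover have "ga_mult G (ga_mult G r a) e = (\<lambda>_. 0)"
    by (simp add: ga_mult_assoc ae ga_mult_zero_right)
  ultimately show "ga_mult G a r \<in> {a \<in> group_alg G. ga_mult G a e = (\<lambda>_. 0)}"
    and "ga_mult G r a \<in> {a \<in> group_alg G. ga_mult G a e = (\<lambda>_. 0)}"
    by (simp_all add: ga_mult_closed)
qed (auto simp: group_alg_def ga_mult_zero_left)

lemma ga_center_subset_if_central_identity: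
  assumes I: "ga_ideal G I" and f: "f \<in> I"
    and f_central: "\<And>b. b \<in> group_alg G \<Longrightarrow> ga_mult G f b = ga_mult G b f"
    and f_identity: "\<And>a. a \<in> I \<Longrightarrow> ga_mult G a f = a"
  shows "ga_center G I \<subseteq> ga_center G (group_alg G)"
proof
  fix \<alpha> assume "\<alpha> \<in> ga_center G I"
  then have \<alpha>: "\<alpha> \<in> I" and \<alpha>_comm: "\<And>c. c \<in> I \<Longrightarrow> ga_mult G \<alpha> c = ga_mult G c \<alpha>"
    by (auto simp: ga_center_def)
  have "\<alpha> \<in> group_alg G"
    using I \<alpha> by (auto simp: ga_ideal_def)
  moreover have "ga_mult G \<alpha> b = ga_mult G b \<alpha>" if b: "b \<in> group_alg G" for b
  proof -
    have fb: "ga_mult G f b \<in> I"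
      using I f b by (simp add: ga_ideal_def)
    have "ga_mult G \<alpha> b = ga_mult G \<alpha> (ga_mult G f b)"
      by (simp add: f_identity[OF \<alpha>] flip: ga_mult_assoc)
    also have "\<dots> = ga_mult G (ga_mult G f b) \<alpha>"
      by (rule \<alpha>_comm[OF fb])
    also have "\<dots> = ga_mult G (ga_mult G b f) \<alpha>"
      by (simp add: f_central[OF b])
    also have "\<dots> = ga_mult G b \<alpha>"
      by (simp add: ga_mult_assoc f_central[OF \<open>\<alpha> \<in> group_alg G\<close>] f_identity[OF \<alpha>])
    finally show ?thesis .
  qed
  ultimately show "\<alpha> \<in> ga_center G (group_alg G)"
    by (simp add: ga_center_def)
qed

end

definition ga_avg :: "'g set \<Rightarrow> 'g \<Rightarrow> 'f::field" where
  "ga_avg H = (\<lambda>z. if z \<in> H then inverse (of_nat (card H)) else 0)"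

lemma ga_avg_in_group_alg: "H \<subseteq> carrier G \<Longrightarrow> ga_avg H \<in> group_alg G"
  by (auto simp: ga_avg_def group_alg_def)

context group
begin

lemma ga_avg_commute:
  assumes "H \<lhd> G"
  shows "ga_mult G (ga_avg H) b = ga_mult G b (ga_avg H)"
proof (rule ga_mult_class_function_commute)
  fix g h assume g: "g \<in> carrier G" and h: "h \<in> carrier G"
  have "inv g \<otimes> h \<otimes> g \<in> H \<longleftrightarrow> h \<in> H"
  proof
    assume "inv g \<otimes> h \<otimes> g \<in> H"
    then have "g \<otimes> (inv g \<otimes> h \<otimes> g) \<otimes> inv g \<in> H"
      using assms g by (simp add: normal.inv_op_closed2)
    moreover have "g \<otimes> (inv g \<otimes> h \<otimes> g) \<otimes> inv g = h"
      using g h by (simp add: m_assoc[symmetric]) (simp add: m_assoc)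
    ultimately show "h \<in> H"
      by simp
  qed (use assms g in \<open>simp add: normal.inv_op_closed1\<close>)
  then show "ga_avg H (inv g \<otimes> h \<otimes> g) = ga_avg H h"
    by (simp add: ga_avg_def)
qed

lemma ga_basis_mult_avg:
  assumes fin: "finite (carrier G)" and H: "subgroup H G" and h: "h \<in> H"
  shows "ga_mult G (ga_basis G h) (ga_avg H) = ga_avg H"
proof (rule ext)
  fix z
  have hG: "h \<in> carrier G"
    using H h by (rule subgroup.mem_carrier)
  show "ga_mult G (ga_basis G h) (ga_avg H) z = ga_avg H z"
  proof (cases "z \<in> carrier G")
    case z: True
    have "inv h \<otimes> z \<in> H \<longleftrightarrow> z \<in> H"
    proof
      assume "inv h \<otimes> z \<in> H"
      then have "h \<otimes> (inv h \<otimes> z) \<in> H"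
        using H h by (simp add: subgroup.m_closed)
      then show "z \<in> H"
        using hG z by (simp add: m_assoc[symmetric])
    qed (use H h in \<open>simp add: subgroup.m_closed subgroup.m_inv_closed\<close>)
    then show ?thesis
      using fin hG z by (simp add: ga_mult_basis_left ga_avg_def)
  next
    case False
    then show ?thesis
      using H by (auto simp: ga_mult_def ga_avg_def dest: subgroup.mem_carrier)
  qed
qed

lemma Delta_ideal:
  assumes "H \<subseteq> carrier G"
  shows "ga_ideal G (Delta G H)"
  unfolding Delta_def using assms
  by (intro ga_ideal_ga_ideal_gen) (auto simp: group_alg_def ga_basis_def)

lemma Delta_generator: "h \<in> H \<Longrightarrow> (\<lambda>z. ga_basis G h z - ga_basis G \<one> z) \<in> Delta G H"
  unfolding Delta_def by (rule subsetD[OF ga_ideal_gen_subset]) blast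

lemma Delta_mult_avg:
  assumes fin: "finite (carrier G)" and H: "H \<lhd> G" and a: "a \<in> Delta G H"
  shows "ga_mult G a (ga_avg H) = (\<lambda>_. 0)"
proof -
  have sub: "subgroup H G"
    using H by (rule normal_imp_subgroup)
  then have avg: "ga_avg H \<in> group_alg G"
    by (simp add: ga_avg_in_group_alg subgroup.subset)
  let ?J = "{a \<in> group_alg G. ga_mult G a (ga_avg H) = (\<lambda>_. 0)}"
  have "ga_ideal G ?J"
    using avg ga_avg_commute[OF H] by (rule ga_annihilator_ideal)
  moreover have "ga_mult G (\<lambda>z. ga_basis G h z - ga_basis G \<one> z) (ga_avg H) = (\<lambda>_. 0)"
    if "h \<in> H" for h
    using fin sub that by (simp add: ga_mult_diff_left ga_basis_mult_avg subgroup.one_closed)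
  ultimately have "Delta G H \<subseteq> ?J"
    unfolding Delta_def using sub
    by (intro ga_ideal_gen_least) (auto simp: group_alg_def ga_basis_def subgroup.mem_carrier)
  then show ?thesis
    using a by blast
qed

lemma one_minus_avg_in_Delta:
  assumes fin: "finite (carrier G)" and H: "subgroup H G" and card: "of_nat (card H) \<noteq> (0::'f::field)"
  shows "(\<lambda>z. ga_basis G \<one> z - ga_avg H z) \<in> (Delta G H :: ('a \<Rightarrow> 'f) set)"
proof -
  define c :: 'f where "c = inverse (of_nat (card H))"
  have finH: "finite H"
    using fin H by (meson finite_subset subgroup.subset)
  have "(\<lambda>z. \<Sum>h\<in>H. - c * (ga_basis G h z - ga_basis G \<one> z)) \<in> Delta G H"
  proof (rule ga_ideal_sum[OF _ finH])
    show "ga_ideal G (Delta G H :: ('a \<Rightarrow> 'f) set)"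
      using H by (simp add: Delta_ideal subgroup.subset)
    then show "(\<lambda>z. - c * (ga_basis G h z - ga_basis G \<one> z)) \<in> Delta G H" if "h \<in> H" for h
      by (rule ga_ideal_smult[OF fin _ Delta_generator[OF that]])
  qed
  moreover have "(\<Sum>h\<in>H. - c * (ga_basis G h z - ga_basis G \<one> z)) = ga_basis G \<one> z - ga_avg H z" for z
  proof -
    have "(\<Sum>h\<in>H. - c * (ga_basis G h z - ga_basis G \<one> z))
        = - c * ((\<Sum>h\<in>H. ga_basis G h z) - of_nat (card H) * ga_basis G \<one> z)"
      by (simp add: sum_negf sum_distrib_left[symmetric] sum_subtractf)
    also have "(\<Sum>h\<in>H. ga_basis G h z) = (if z \<in> H then 1 else 0)"
      using finH by (simp add: ga_basis_def)
    finally show ?thesis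
      using card H by (auto simp: c_def ga_avg_def ga_basis_def subgroup.one_closed right_diff_distrib)
  qed
  ultimately show ?thesis
    by simp
qed

theorem ga_center_Delta_subset:
  assumes fin: "finite (carrier G)" and H: "H \<lhd> G" and card: "of_nat (card H) \<noteq> (0::'f::field)"
  shows "ga_center G (Delta G H :: ('a \<Rightarrow> 'f) set) \<subseteq> ga_center G (group_alg G)"
proof (rule ga_center_subset_if_central_identity)
  have sub: "subgroup H G"
    using H by (rule normal_imp_subgroup)
  show "ga_ideal G (Delta G H :: ('a \<Rightarrow> 'f) set)"
    using sub by (simp add: Delta_ideal subgroup.subset)
  show "(\<lambda>z. ga_basis G \<one> z - ga_avg H z) \<in> (Delta G H :: ('a \<Rightarrow> 'f) set)"
    using fin sub card by (rule one_minus_avg_in_Delta)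
  show "ga_mult G (\<lambda>z. ga_basis G \<one> z - ga_avg H z) b = ga_mult G b (\<lambda>z. ga_basis G \<one> z - ga_avg H z)"
    if "b \<in> group_alg G" for b :: "'a \<Rightarrow> 'f"
    using fin that
    by (simp add: ga_mult_diff_left ga_mult_diff_right ga_mult_one_left ga_mult_one_right ga_avg_commute[OF H, of b])
  show "ga_mult G a (\<lambda>z. ga_basis G \<one> z - ga_avg H z) = a" if "a \<in> Delta G H" for a :: "'a \<Rightarrow> 'f"
  proof -
    have "a \<in> group_alg G"
      using that \<open>ga_ideal G (Delta G H)\<close> by (auto simp: ga_ideal_def)
    then show ?thesis
      using fin H that by (simp add: ga_mult_diff_right ga_mult_one_right Delta_mult_avg)
  qed
qed

lemma conj_generate_closed:
  assumes S: "S \<subseteq> carrier G" and g: "g \<in> carrier G"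
    and gen: "\<And>s. s \<in> S \<Longrightarrow> g \<otimes> s \<otimes> inv g \<in> generate G S"
    and h: "h \<in> generate G S"
  shows "g \<otimes> h \<otimes> inv g \<in> generate G S"
  using h
proof (induction rule: generate.induct)
  case one
  then show ?case
    using g by (simp add: generate.one)
next
  case (incl s)
  then show ?case
    by (rule gen)
next
  case (inv s)
  have "g \<otimes> inv s \<otimes> inv g = inv (g \<otimes> s \<otimes> inv g)"
    using S g inv by (auto simp: inv_mult_group m_assoc)
  then show ?case
    using generate_m_inv_closed[OF S gen[OF inv]] by simp
next
  case (eng h1 h2)
  have "h1 \<in> carrier G" "h2 \<in> carrier G"
    using S eng.hyps by (auto intro: generate_in_carrier)
  then have "g \<otimes> (h1 \<otimes> h2) \<otimes> inv g = (g \<otimes> h1 \<otimes> inv g) \<otimes> (g \<otimes> h2 \<otimes> inv g)"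
    using g by (simp add: inv_solve_left m_assoc)
  then show ?case
    using generate.eng[OF eng.IH] by simp
qed

lemma finite_subgroup_conj_inv_closed:
  assumes H: "subgroup H G" "finite H" and g: "g \<in> carrier G"
    and conj: "\<And>h. h \<in> H \<Longrightarrow> g \<otimes> h \<otimes> inv g \<in> H"
    and h: "h \<in> H"
  shows "inv g \<otimes> h \<otimes> g \<in> H"
proof -
  have HG: "H \<subseteq> carrier G"
    using H(1) by (rule subgroup.subset)
  have "inj_on (\<lambda>h. g \<otimes> h \<otimes> inv g) H"
    using HG g by (intro inj_onI) (auto simp: subsetD)
  then have "(\<lambda>h. g \<otimes> h \<otimes> inv g) ` H = H"
    using H(2) conj by (intro endo_inj_surj) auto
  then obtain h' where h': "h' \<in> H" "h = g \<otimes> h' \<otimes> inv g"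
    using h by blast
  then show ?thesis
    using HG g by (simp add: m_assoc[symmetric] subsetD) (simp add: m_assoc subsetD)
qed

lemma normal_generate_if_conj_generators:
  assumes fin: "finite (carrier G)" and S: "S \<subseteq> carrier G" and T: "carrier G = generate G T"
    and conj: "\<And>s t. s \<in> S \<Longrightarrow> t \<in> T \<Longrightarrow> inv t \<otimes> s \<otimes> t \<in> generate G S"
  shows "generate G S \<lhd> G"
proof -
  let ?H = "generate G S"
  let ?N = "{g \<in> carrier G. \<forall>h\<in>?H. g \<otimes> h \<otimes> inv g \<in> ?H}"
  have HG: "?H \<subseteq> carrier G"
    using S by (rule generate_incl)
  have H: "subgroup ?H G"
    using S by (rule generate_is_subgroup)
  have finH: "finite ?H"
    using HG fin by (rule finite_subset)
  have N: "subgroup ?N G"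
  proof (rule subgroupI)
    have "\<one> \<in> ?N"
      using HG by (auto simp: subsetD)
    then show "?N \<noteq> {}"
      by blast
  next
    fix g assume g: "g \<in> ?N"
    then have "inv g \<otimes> h \<otimes> inv (inv g) \<in> ?H" if "h \<in> ?H" for h
      using finite_subgroup_conj_inv_closed[OF H finH, of g h] that by simp
    then show "inv g \<in> ?N"
      using g by simp
  next
    fix g1 g2 assume g1: "g1 \<in> ?N" and g2: "g2 \<in> ?N"
    show "g1 \<otimes> g2 \<in> ?N"
    proof (intro CollectI conjI ballI)
      show "g1 \<otimes> g2 \<in> carrier G"
        using g1 g2 by simp
      fix h assume h: "h \<in> ?H"
      then have "g1 \<otimes> (g2 \<otimes> h \<otimes> inv g2) \<otimes> inv g1 \<in> ?H"
        using g1 g2 by blast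
      moreover have "g1 \<otimes> (g2 \<otimes> h \<otimes> inv g2) \<otimes> inv g1 = g1 \<otimes> g2 \<otimes> h \<otimes> inv (g1 \<otimes> g2)"
        using g1 g2 h HG by (simp add: inv_mult_group m_assoc subsetD)
      ultimately show "g1 \<otimes> g2 \<otimes> h \<otimes> inv (g1 \<otimes> g2) \<in> ?H"
        by simp
    qed
  qed blast
  have "T \<subseteq> ?N"
  proof
    fix t assume t: "t \<in> T"
    then have tG: "t \<in> carrier G"
      unfolding T by (rule generate.incl)
    have "inv t \<otimes> h \<otimes> inv (inv t) \<in> ?H" if h: "h \<in> ?H" for h
    proof (rule conj_generate_closed[OF S _ _ h])
      show "inv t \<in> carrier G"
        using tG by simp
      show "inv t \<otimes> s \<otimes> inv (inv t) \<in> ?H" if "s \<in> S" for s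
        using conj[OF that t] tG by simp
    qed
    then have "inv t \<in> ?N"
      using tG by simp
    then have "inv (inv t) \<in> ?N"
      by (rule subgroup.m_inv_closed[OF N])
    then show "t \<in> ?N"
      using tG by simp
  qed
  then have "generate G T \<subseteq> ?N"
    using N by (rule generate_subgroup_incl)
  then have "carrier G \<subseteq> ?N"
    using T by simp
  then show ?thesis
    using H by (intro normal_invI) auto
qed

end

theorem proposition3p11:
  fixes G :: "('g, 'b) monoid_scheme" and x y :: 'g
    and k :: nat and m :: nat and t :: int
  assumes F: "CHAR('f::{field,finite}) = 3"
    and m_def: "m = 3 * k + 1"
    and t3: "t ^ 3 mod int m = 1 mod int m"
    and tgcd: "gcd (int m) (t - 1) = 1"
    and grp: "group G"
    and xG: "x \<in> carrier G" and yG: "y \<in> carrier G"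
    and xm: "x [^]\<^bsub>G\<^esub> m = \<one>\<^bsub>G\<^esub>"
    and y3: "y [^]\<^bsub>G\<^esub> (3::nat) = \<one>\<^bsub>G\<^esub>"
    and rel: "inv\<^bsub>G\<^esub> y \<otimes>\<^bsub>G\<^esub> x \<otimes>\<^bsub>G\<^esub> y = x [^]\<^bsub>G\<^esub> t"
    and gen: "carrier G = generate G {x, y}"
    and ord: "finite (carrier G)" "card (carrier G) = 3 * m"
  shows "ga_center G (Delta G (generate G {x}) :: ('g \<Rightarrow> 'f) set)
           \<subseteq> ga_center G (group_alg G)"
proof -
  interpret group G by (rule grp)
  have "inv\<^bsub>G\<^esub> y \<otimes>\<^bsub>G\<^esub> x \<otimes>\<^bsub>G\<^esub> y \<in> generate G {x}"
    unfolding rel using xG by (simp add: subgroup_int_pow_closed generate_is_subgroup generate.incl)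
  then have normal: "generate G {x} \<lhd> G"
    using ord(1) xG gen by (intro normal_generate_if_conj_generators) (auto simp: m_assoc generate.incl)
  have "card (generate G {x}) dvd m"
    using xG xm by (simp add: pow_eq_id generate_pow_card[symmetric])
  moreover have "\<not> 3 dvd m"
    unfolding m_def by presburger
  ultimately have "\<not> CHAR('f) dvd card (generate G {x})"
    unfolding F using dvd_trans by blast
  then have "of_nat (card (generate G {x})) \<noteq> (0::'f)"
    by (simp add: of_nat_eq_0_iff_char_dvd)
  then show ?thesis
    by (rule ga_center_Delta_subset[OF ord(1) normal])
qed

end
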